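(* Let $n>1$ and let $a_0,\dots,a_{n-1},c_0,\dots,c_{n-1}\in\mathbb Z/(n)$ with $a_i=a_{-i}$ and $c_i=c_{-i}$ for all $i\in\mathbb Z/(n)$. If there exists an invertible $a\in\mathbb Z/(n)$ such that $a\,a_i=c_{ai}$ for all $i\in\mathbb Z/(n)$, then the solutions $(X,r_{a_0,\dots,a_{n-1}})$ and $(X,r_{c_0,\dots,c_{n-1}})$ are isomorphic. Conversely, if the bilinear forms $b_{a_0,\dots,a_{n-1}}$ and $b_{c_0,\dots,c_{n-1}}$ are both non-singular and these two solutions are isomorphic, then there exists an invertible $a\in\mathbb Z/(n)$ with $a\,a_i=c_{ai}$ for all $i$.
   Context: Let $n>1$, $X=\{x_{ij}: i,j\in\mathbb Z/(n)\}$ (a set of $n^2$ elements indexed by $(\mathbb Z/(n))^2$). For $j_0,\dots,j_{n-1}\in\mathbb Z/(n)$ with $j_i=j_{-i}$, let $r_{j_0,\dots,j_{n-1}}(x,y)=(\lambda_x(y),\lambda^{-1}_{\lambda_x(y)}(x))$, where $\lambda_{x_{ij}}(x_{kl})=x_{k+j,\ l-j_{k+j-i}}$; this is a solution of the YBE (it is the restriction to $x_{ij}=(e_i,j)$ of the solution associated to the left brace $(\mathbb Z/(n))^n\times\mathbb Z/(n)$ with $(u,i)\circ(v,j)=(u+\alpha(i)(v),i+j)$, $(u,i)+(v,j)=(u+v,i+j+b(u,v))$, $\alpha(i)(e_k)=e_{i+k}$). Here $b_{j_0,\dots,j_{n-1}}$ is the bilinear form on $(\mathbb Z/(n))^n$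 with $b(e_k,e_l)=j_{l-k}$ for the standard basis $(e_k)_{k\in\mathbb Z/(n)}$; it is non-singular if $b(u,v)=0$ for all $v$ implies $u=0$. An isomorphism of solutions $f:(X,r)\to(X,s)$ (with $r(x,y)=(\sigma_x(y),\cdot)$, $s(x,y)=(\sigma'_x(y),\cdot)$) is a bijection with $f(\sigma_x(y))=\sigma'_{f(x)}(f(y))$ for all $x,y$. *)

theory Defs
  imports Main
begin

text \<open>Z/(n) is represented by the natural numbers 0..n-1 with arithmetic mod n.
 The element x_{ij} of X is the pair (i,j).  A parameter sequence j_0..j_{n-1}
 is a function s :: nat => nat, only its values on 0..n-1 matter.\<close>

definition Xset :: "nat \<Rightarrow> (nat \<times> nat) set" where
  "Xset n = {0..<n} \<times> {0..<n}"

definition zn_seq :: "nat \<Rightarrow> (nat \<Rightarrow> nat) \<Rightarrow> bool" where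
  "zn_seq n s \<longleftrightarrow> (\<forall>i<n. s i < n)"

definition sym_seq :: "nat \<Rightarrow> (nat \<Rightarrow> nat) \<Rightarrow> bool" where
  "sym_seq n s \<longleftrightarrow> (\<forall>i<n. s i = s ((n - i) mod n))"

text \<open>lambda_{x_{ij}}(x_{kl}) = x_{k+j, l - s_{k+j-i}}\<close>
definition lam :: "nat \<Rightarrow> (nat \<Rightarrow> nat) \<Rightarrow> nat \<times> nat \<Rightarrow> nat \<times> nat \<Rightarrow> nat \<times> nat" where
  "lam n s x y = (case x of (i, j) \<Rightarrow> case y of (k, l) \<Rightarrow>
     ((k + j) mod n, (l + n - s ((k + j + n - i) mod n)) mod n))"

text \<open>The solution r_s(x,y) = (lambda_x(y), lambda^{-1}_{lambda_x(y)}(x)); isomorphism of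
 solutions as in the paper: a bijection f of X with f(lambda_x y) = lambda'_{f x}(f y).\<close>
definition sol_iso :: "nat \<Rightarrow> (nat \<Rightarrow> nat) \<Rightarrow> (nat \<Rightarrow> nat) \<Rightarrow> bool" where
  "sol_iso n s t \<longleftrightarrow> (\<exists>f. bij_betw f (Xset n) (Xset n) \<and>
     (\<forall>x\<in>Xset n. \<forall>y\<in>Xset n. f (lam n s x y) = lam n t (f x) (f y)))"

text \<open>Vectors of (Z/(n))^n: functions u with u k < n for k < n (values at k >= n irrelevant).\<close>
definition znvec :: "nat \<Rightarrow> (nat \<Rightarrow> nat) \<Rightarrow> bool" where
  "znvec n u \<longleftrightarrow> (\<forall>k<n. u k < n)"

definition bform :: "nat \<Rightarrow> (nat \<Rightarrow> nat) \<Rightarrow> (nat \<Rightarrow> nat) \<Rightarrow> (nat \<Rightarrow> nat) \<Rightarrow> nat" where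
  "bform n s u v = (\<Sum>k<n. \<Sum>l<n. u k * v l * s ((l + n - k) mod n)) mod n"

definition nonsingular :: "nat \<Rightarrow> (nat \<Rightarrow> nat) \<Rightarrow> bool" where
  "nonsingular n s \<longleftrightarrow> (\<forall>u. znvec n u \<longrightarrow> (\<forall>v. znvec n v \<longrightarrow> bform n s u v = 0) \<longrightarrow> (\<forall>k<n. u k = 0))"

definition zn_unit :: "nat \<Rightarrow> nat \<Rightarrow> bool" where
  "zn_unit n a \<longleftrightarrow> a < n \<and> (\<exists>b<n. (a * b) mod n = 1)"

definition scaled :: "nat \<Rightarrow> nat \<Rightarrow> (nat \<Rightarrow> nat) \<Rightarrow> (nat \<Rightarrow> nat) \<Rightarrow> bool" where
  "scaled n a s t \<longleftrightarrow> (\<forall>i<n. (a * s i) mod n = t ((a * i) mod n))"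

end

theory Submission
  imports Defs "HOL-Library.FuncSet"
begin

(* Scaling both indices by a unit a carries r_{a_0..a_{n-1}} onto r_{c_0..c_{n-1}} as soon as
   a a_i = c_{ai}. Conversely, write an isomorphism as x_{ij} |-> x_{f1(i,j), f2(i,j)}, with f1, f2
   read as n-periodic functions on Z^2. The homomorphism identity with j = 0 says that lowering l
   by a_{k-i} adds f2(i,0) to f1(k,l). Non-singularity of b makes the circulant matrix (a_{l-k})
   invertible, so lowering l by 1 in a single row k and by 0 in all other rows is a combination of
   such moves; comparing two rows shows that f1(k,l) does not depend on l. Then f2(i,j) = h(j) for
   an additive h, hence h(j) = a j, and the second coordinate of the identity turns into
   a a_k = c_{ak}; surjectivity of the isomorphism makes a a unit. *)

definition residue :: "nat \<Rightarrow> int \<Rightarrow> nat" where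
  "residue n z = nat (z mod int n)"

lemma residue_lt: "n > 0 \<Longrightarrow> residue n z < n"
  by (simp add: residue_def nat_less_iff)

lemma int_residue: "n > 0 \<Longrightarrow> int (residue n z) = z mod int n"
  by (simp add: residue_def)

lemma residue_of_nat [simp]: "residue n (int k) = k mod n"
  by (simp add: residue_def flip: zmod_int)

lemma residue_mod [simp]: "residue n (z mod int n) = residue n z"
  by (simp add: residue_def)

lemma residue_eq_iff: "n > 0 \<Longrightarrow> residue n z = residue n w \<longleftrightarrow> z mod int n = w mod int n"
  by (metis int_residue of_nat_eq_iff)

lemma nat_sub_mod_eq_residue: "b \<le> n \<Longrightarrow> (a + n - b) mod n = residue n (int a - int b)"
proof -
  assume "b \<le> n"
  then have "int (a + n - b) = int a - int b + int n" by simp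
  then have "residue n (int (a + n - b)) = residue n (int a - int b)"
    by (simp add: residue_def)
  then show ?thesis by simp
qed

definition seq_at :: "nat \<Rightarrow> (nat \<Rightarrow> nat) \<Rightarrow> int \<Rightarrow> int" where
  "seq_at n s z = int (s (residue n z))"

lemma lam_residue:
  assumes "n > 0" and "zn_seq n s"
  shows "lam n s (residue n i, residue n j) (residue n k, residue n l) =
    (residue n (k + j), residue n (l - seq_at n s (k + j - i)))"
proof -
  have lt: "s (residue n (k + j - i)) \<le> n"
    using assms by (simp add: zn_seq_def residue_lt less_imp_le)
  have "(residue n k + residue n j + n - residue n i) mod n =
      residue n (int (residue n k) + int (residue n j) - int (residue n i))"
    using assms by (simp add: nat_sub_mod_eq_residue residue_lt less_imp_le)
  also have "\<dots> = residue n (k + j - i)"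
    using assms by (simp add: residue_eq_iff int_residue) (intro mod_diff_cong mod_add_cong; simp)
  finally have "(residue n k + residue n j + n - residue n i) mod n = residue n (k + j - i)" .
  moreover have "(residue n k + residue n j) mod n = residue n (k + j)"
    using assms by (simp add: residue_eq_iff int_residue flip: residue_of_nat)
      (intro mod_add_cong; simp)
  ultimately show ?thesis
    using assms lt by (simp add: lam_def nat_sub_mod_eq_residue seq_at_def int_residue
        residue_eq_iff mod_simps)
qed

lemma mult_residue: "n > 0 \<Longrightarrow> (a * residue n z) mod n = residue n (int a * z)"
  by (simp add: residue_eq_iff int_residue mod_mult_right_eq flip: residue_of_nat)

definition scale_map :: "nat \<Rightarrow> nat \<Rightarrow> nat \<times> nat \<Rightarrow> nat \<times> nat" where
  "scale_map n a = (\<lambda>(i, j). ((a * i) mod n, (a * j) mod n))"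

lemma mod_mult_cancel_inverse:
  fixes a b n i :: nat
  assumes "(a * b) mod n = 1" and "i < n"
  shows "(b * ((a * i) mod n)) mod n = i"
proof -
  have "(b * ((a * i) mod n)) mod n = ((a * b) mod n * i) mod n"
    by (simp add: mod_mult_right_eq mod_mult_left_eq ac_simps)
  then show ?thesis using assms by simp
qed

lemma bij_scale_map:
  assumes "zn_unit n a"
  shows "bij_betw (scale_map n a) (Xset n) (Xset n)"
proof -
  obtain b where b: "(a * b) mod n = 1" "(b * a) mod n = 1"
    using assms by (auto simp: zn_unit_def mult.commute)
  show ?thesis
    by (rule bij_betw_byWitness[where f' = "scale_map n b"])
      (auto simp: scale_map_def Xset_def mod_mult_cancel_inverse[OF b(1)]
        mod_mult_cancel_inverse[OF b(2)])
qed

lemma scale_map_hom: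
  assumes s: "zn_seq n s" and t: "zn_seq n t" and sc: "scaled n a s t"
    and x: "x \<in> Xset n" and y: "y \<in> Xset n"
  shows "scale_map n a (lam n s x y) = lam n t (scale_map n a x) (scale_map n a y)"
proof -
  obtain i j k l where ij: "x = (i, j)" and kl: "y = (k, l)" and lt: "i < n" "j < n" "k < n" "l < n"
    using x y by (auto simp: Xset_def)
  then have n: "n > 0" by simp
  define m where "m = residue n (int k + int j - int i)"
  have "seq_at n t (int a * int k + int a * int j - int a * int i) = int (t ((a * m) mod n))"
    by (simp add: seq_at_def m_def n mult_residue algebra_simps)
  also have "\<dots> = int ((a * s m) mod n)"
    using sc n by (simp add: scaled_def m_def residue_lt)
  finally have T: "seq_at n t (int a * int k + int a * int j - int a * int i) mod int n =
      (int a * seq_at n s (int k + int j - int i)) mod int n"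
    by (simp add: seq_at_def m_def zmod_int)
  have "scale_map n a (lam n s x y) =
      (residue n (int a * (int k + int j)),
       residue n (int a * (int l - seq_at n s (int k + int j - int i))))"
    using lam_residue[OF n s, of "int i" "int j" "int k" "int l"] lt
    by (simp add: ij kl scale_map_def n mult_residue)
  also have "\<dots> = lam n t (residue n (int a * int i), residue n (int a * int j))
      (residue n (int a * int k), residue n (int a * int l))"
    using T by (simp add: lam_residue[OF n t] residue_eq_iff n algebra_simps)
      (metis mod_diff_right_eq)
  also have "\<dots> = lam n t (scale_map n a x) (scale_map n a y)"
    by (simp add: ij kl scale_map_def flip: of_nat_mult)
  finally show ?thesis .
qed

lemma scaled_imp_sol_iso:
  assumes "zn_seq n s" "zn_seq n t" "zn_unit n a" "scaled n a s t"
  shows "sol_iso n s t"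
  unfolding sol_iso_def using assms bij_scale_map scale_map_hom by blast

lemma sum_mod_cong:
  fixes f g :: "'a \<Rightarrow> 'b::euclidean_semiring_cancel"
  assumes "\<And>i. i \<in> A \<Longrightarrow> f i mod m = g i mod m"
  shows "(\<Sum>i\<in>A. f i) mod m = (\<Sum>i\<in>A. g i) mod m"
  by (metis (no_types, lifting) assms mod_sum_eq sum.cong)

definition circ :: "nat \<Rightarrow> (nat \<Rightarrow> nat) \<Rightarrow> (nat \<Rightarrow> nat) \<Rightarrow> nat \<Rightarrow> nat" where
  "circ n s u k = (\<Sum>i<n. u i * s ((k + n - i) mod n)) mod n"

lemma bform_eq_sum_circ: "bform n s u v = (\<Sum>l<n. v l * circ n s u l) mod n"
proof -
  have "(\<Sum>k<n. \<Sum>l<n. u k * v l * s ((l + n - k) mod n)) =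
      (\<Sum>l<n. v l * (\<Sum>k<n. u k * s ((l + n - k) mod n)))"
    by (subst sum.swap) (simp add: sum_distrib_left ac_simps)
  then have "bform n s u v = (\<Sum>l<n. v l * (\<Sum>k<n. u k * s ((l + n - k) mod n))) mod n"
    by (simp add: bform_def)
  also have "\<dots> = (\<Sum>l<n. v l * circ n s u l) mod n"
    unfolding circ_def by (subst (1 2) mod_sum_eq[symmetric]) (simp add: mod_mult_right_eq)
  finally show ?thesis .
qed

lemma circ_kernel_trivial:
  assumes "nonsingular n s" and "znvec n w" and "\<forall>l<n. circ n s w l = 0"
  shows "\<forall>k<n. w k = 0"
  using assms by (simp add: nonsingular_def bform_eq_sum_circ)

lemma circ_inj:
  assumes ns: "nonsingular n s" and u: "znvec n u" and u': "znvec n u'"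
    and eq: "\<forall>k<n. circ n s u k = circ n s u' k"
  shows "\<forall>k<n. u k = u' k"
proof (intro allI impI)
  fix k assume k: "k < n"
  then have n: "n > 0" by simp
  define w where "w i = residue n (int (u i) - int (u' i))" for i
  have "circ n s w l = 0" if "l < n" for l
  proof -
    let ?c = "\<lambda>i. int (s ((l + n - i) mod n))"
    have "int (circ n s w l) = (\<Sum>i<n. int (w i) * ?c i) mod int n"
      by (simp add: circ_def zmod_int)
    also have "\<dots> = (\<Sum>i<n. (int (u i) - int (u' i)) * ?c i) mod int n"
      by (rule sum_mod_cong) (simp add: w_def int_residue n mod_mult_left_eq)
    also have "\<dots> = ((\<Sum>i<n. int (u i) * ?c i) - (\<Sum>i<n. int (u' i) * ?c i)) mod int n"
      by (simp add: left_diff_distrib sum_subtractf)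
    also have "\<dots> = 0"
    proof -
      have "int (circ n s u l) = int (circ n s u' l)"
        using eq that by simp
      then have "(\<Sum>i<n. int (u i) * ?c i) mod int n = (\<Sum>i<n. int (u' i) * ?c i) mod int n"
        by (simp add: circ_def zmod_int)
      then show ?thesis
        by (simp only: mod_eq_dvd_iff dvd_imp_mod_0)
    qed
    finally show ?thesis by simp
  qed
  moreover have "znvec n w"
    using n by (simp add: znvec_def w_def residue_lt)
  ultimately have "w k = 0"
    using circ_kernel_trivial[OF ns] k by blast
  then have "(int (u k) - int (u' k)) mod int n = 0"
    using int_residue[OF n, of "int (u k) - int (u' k)"] by (simp add: w_def)
  then have "int (u k) mod int n = int (u' k) mod int n"
    by (simp add: mod_eq_dvd_iff dvd_eq_mod_eq_0)
  then show "u k = u' k"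
    using u u' k by (simp add: znvec_def flip: zmod_int)
qed

lemma circ_surj:
  assumes ns: "nonsingular n s" and c: "znvec n c"
  shows "\<exists>u. znvec n u \<and> (\<forall>k<n. circ n s u k = c k)"
proof -
  define V where "V = PiE {..<n} (\<lambda>_. {..<n})"
  define L where "L u = restrict (circ n s u) {..<n}" for u
  have V_iff: "u \<in> V \<longleftrightarrow> znvec n u \<and> (\<forall>k. k \<ge> n \<longrightarrow> u k = undefined)" for u
    by (auto simp: V_def znvec_def PiE_def extensional_def)
  have "L ` V \<subseteq> V"
    by (auto simp: V_iff L_def znvec_def circ_def)
  moreover have "inj_on L V"
  proof (rule inj_onI)
    fix u u' assume "u \<in> V" "u' \<in> V" "L u = L u'"
    then have "\<forall>k<n. circ n s u k = circ n s u' k"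
      by (metis L_def lessThan_iff restrict_apply)
    with \<open>u \<in> V\<close> \<open>u' \<in> V\<close> have "\<forall>k<n. u k = u' k"
      using circ_inj[OF ns] by (simp add: V_iff)
    with \<open>u \<in> V\<close> \<open>u' \<in> V\<close> show "u = u'"
      by (auto simp: V_def intro: PiE_ext)
  qed
  ultimately have "L ` V = V"
    by (intro endo_inj_surj) (simp_all add: V_def finite_PiE)
  moreover have "restrict c {..<n} \<in> V"
    using c by (auto simp: V_def znvec_def)
  ultimately obtain u where u: "u \<in> V" "L u = restrict c {..<n}"
    by (metis imageE)
  have "circ n s u k = c k" if "k < n" for k
    using fun_cong[OF u(2), of k] that by (simp add: L_def)
  with u(1) show ?thesis
    by (auto simp: V_iff)
qed

lemma additive_mod_linear:
  fixes h :: "int \<Rightarrow> int" and m :: int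
  assumes add: "\<And>x y. h (x + y) = (h x + h y) mod m"
  shows "h z = (z * h 1) mod m"
proof -
  have h_mod: "h x mod m = h x" for x
    using add[of x 0] by (metis add.right_neutral mod_mod_trivial)
  have "(h 0 + h 0) mod m = h 0 mod m"
    using add[of 0 0] h_mod by simp
  then have "m dvd h 0"
    by (simp only: mod_eq_dvd_iff add_diff_cancel_right')
  then have "h 0 = 0"
    using h_mod[of 0] by (simp add: dvd_imp_mod_0)
  show ?thesis
  proof (induction z rule: int_induct[where k = 0])
    case base
    show ?case using \<open>h 0 = 0\<close> by simp
  next
    case (step1 i)
    then show ?case
      using add[of i 1] by (simp add: mod_add_left_eq distrib_right)
  next
    case (step2 i)
    have "h i = (h (i - 1) + h 1) mod m"
      using add[of "i - 1" 1] by simp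
    then have "h (i - 1) mod m = (h i - h 1) mod m"
      by (simp add: mod_diff_left_eq)
    then show ?case
      using step2.IH h_mod by (simp add: mod_diff_left_eq left_diff_distrib)
  qed
qed

locale sol_hom =
  fixes n :: nat and s t :: "nat \<Rightarrow> nat" and f :: "nat \<times> nat \<Rightarrow> nat \<times> nat"
  assumes n_pos: "n > 0"
    and zn_seq_s: "zn_seq n s" and zn_seq_t: "zn_seq n t"
    and f_Xset: "\<And>x. x \<in> Xset n \<Longrightarrow> f x \<in> Xset n"
    and f_hom: "\<And>x y. x \<in> Xset n \<Longrightarrow> y \<in> Xset n \<Longrightarrow> f (lam n s x y) = lam n t (f x) (f y)"
begin

definition f1 :: "int \<Rightarrow> int \<Rightarrow> int" where
  "f1 i j = int (fst (f (residue n i, residue n j)))"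

definition f2 :: "int \<Rightarrow> int \<Rightarrow> int" where
  "f2 i j = int (snd (f (residue n i, residue n j)))"

lemma f_residue_Xset: "f (residue n i, residue n j) \<in> Xset n"
  using f_Xset n_pos by (simp add: Xset_def residue_lt)

lemma f1_lt: "f1 i j < int n"
  and f2_lt: "f2 i j < int n"
  using f_residue_Xset[of i j] by (auto simp: f1_def f2_def Xset_def)

lemma f1_mod [simp]: "f1 i j mod int n = f1 i j"
  and f2_mod [simp]: "f2 i j mod int n = f2 i j"
  using f1_lt[of i j] f2_lt[of i j] by (simp_all add: f1_def f2_def)

lemma f_residue: "f (residue n i, residue n j) = (residue n (f1 i j), residue n (f2 i j))"
  using f1_lt[of i j] f2_lt[of i j] by (simp add: f1_def f2_def)

lemma f1_cong: "i mod int n = i' mod int n \<Longrightarrow> j mod int n = j' mod int n \<Longrightarrow> f1 i j = f1 i' j'"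
  by (simp add: f1_def residue_def)

lemma f1_hom: "f1 (k + j) (l - seq_at n s (k + j - i)) = (f1 k l + f2 i j) mod int n"
  and f2_hom: "f2 (k + j) (l - seq_at n s (k + j - i)) =
    (f2 k l - seq_at n t (f1 k l + f2 i j - f1 i j)) mod int n"
proof -
  have "f (residue n (k + j), residue n (l - seq_at n s (k + j - i))) =
      f (lam n s (residue n i, residue n j) (residue n k, residue n l))"
    by (simp add: lam_residue[OF n_pos zn_seq_s])
  also have "\<dots> = lam n t (f (residue n i, residue n j)) (f (residue n k, residue n l))"
    using n_pos by (intro f_hom) (simp_all add: Xset_def residue_lt)
  also have "\<dots> = (residue n (f1 k l + f2 i j),
      residue n (f2 k l - seq_at n t (f1 k l + f2 i j - f1 i j)))"
    by (simp add: f_residue lam_residue[OF n_pos zn_seq_t])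
  finally have eq: "f (residue n (k + j), residue n (l - seq_at n s (k + j - i))) = \<dots>" .
  show "f1 (k + j) (l - seq_at n s (k + j - i)) = (f1 k l + f2 i j) mod int n"
    using eq n_pos by (simp add: f1_def int_residue)
  show "f2 (k + j) (l - seq_at n s (k + j - i)) =
      (f2 k l - seq_at n t (f1 k l + f2 i j - f1 i j)) mod int n"
    using eq n_pos by (simp add: f2_def int_residue)
qed

lemma f1_shift: "f1 k (l - int m * seq_at n s (k - i)) = (f1 k l + int m * f2 i 0) mod int n"
proof (induction m arbitrary: l)
  case 0
  then show ?case by simp
next
  case (Suc m)
  have "f1 k (l - int (Suc m) * seq_at n s (k - i)) =
      f1 k ((l - int m * seq_at n s (k - i)) - seq_at n s (k - i))"
    by (simp add: algebra_simps)
  also have "\<dots> = (f1 k (l - int m * seq_at n s (k - i)) + f2 i 0) mod int n"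
    using f1_hom[of k 0 _ i] by simp
  finally show ?case
    using Suc.IH by (simp add: mod_add_right_eq algebra_simps)
qed

lemma f1_shift_sum:
  "f1 k (l - (\<Sum>i<n. int (u i) * seq_at n s (k - int i))) =
    (f1 k l + (\<Sum>i<n. int (u i) * f2 (int i) 0)) mod int n"
proof -
  have "f1 k (l - (\<Sum>i\<in>I. int (u i) * seq_at n s (k - int i))) =
      (f1 k l + (\<Sum>i\<in>I. int (u i) * f2 (int i) 0)) mod int n" if "finite I" for I
    using that
  proof (induction I arbitrary: l rule: finite_induct)
    case empty
    then show ?case by simp
  next
    case (insert x I)
    then have "f1 k (l - (\<Sum>i\<in>insert x I. int (u i) * seq_at n s (k - int i))) =
        f1 k ((l - (\<Sum>i\<in>I. int (u i) * seq_at n s (k - int i))) - int (u x) * seq_at n s (k - int x))"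
      by (simp add: algebra_simps)
    also have "\<dots> = ((f1 k l + (\<Sum>i\<in>I. int (u i) * f2 (int i) 0)) mod int n + int (u x) * f2 (int x) 0) mod int n"
      by (simp only: f1_shift insert.IH)
    finally show ?case
      using insert by (simp add: mod_add_right_eq algebra_simps)
  qed
  then show ?thesis by simp
qed

end

locale nonsingular_sol_hom = sol_hom +
  assumes n_gt_1: "n > 1" and nonsingular_s: "nonsingular n s"
begin

lemma sum_seq_at_eq_circ:
  "(\<Sum>i<n. int (u i) * seq_at n s (int m - int i)) mod int n = int (circ n s u m)"
proof -
  have "seq_at n s (int m - int i) = int (s ((m + n - i) mod n))" if "i < n" for i
    using that by (simp add: seq_at_def nat_sub_mod_eq_residue)
  then show ?thesis
    by (simp add: circ_def zmod_int)
qed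

lemma f1_shift_one: "f1 k (l - 1) = f1 k l"
proof -
  define k0 where "k0 = residue n k"
  have k0: "k0 < n" "int k0 mod int n = k mod int n"
    using n_pos by (simp_all add: k0_def residue_lt int_residue)
  define c :: "nat \<Rightarrow> nat" where "c m = (if m = k0 then 1 else 0)" for m
  have "znvec n c"
    using n_gt_1 by (simp add: znvec_def c_def)
  then obtain u where u: "\<forall>m<n. circ n s u m = c m"
    using circ_surj[OF nonsingular_s] by blast
  define D where "D = (\<Sum>i<n. int (u i) * f2 (int i) 0)"
  \<comment> \<open>Lowering row m by c m adds the same D to every row; row k1 forces D = 0.\<close>
  have shift_c: "f1 (int m) (l - int (c m)) = (f1 (int m) l + D) mod int n" if "m < n" for m l
  proof -
    have "(\<Sum>i<n. int (u i) * seq_at n s (int m - int i)) mod int n = int (c m)"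
      using u that by (simp add: sum_seq_at_eq_circ)
    then have "(l - int (c m)) mod int n = (l - (\<Sum>i<n. int (u i) * seq_at n s (int m - int i))) mod int n"
      by (simp only: mod_diff_right_eq flip: \<open>_ = int (c m)\<close>)
    then have "f1 (int m) (l - int (c m)) =
        f1 (int m) (l - (\<Sum>i<n. int (u i) * seq_at n s (int m - int i)))"
      by (intro f1_cong) simp_all
    then show ?thesis
      by (simp add: f1_shift_sum D_def)
  qed
  define k1 where "k1 = (k0 + 1) mod n"
  have "k1 < n" "k1 \<noteq> k0"
    using k0 n_gt_1 by (auto simp: k1_def mod_if)
  then have "f1 (int k1) l = (f1 (int k1) l + D) mod int n"
    using shift_c[of k1 l] by (simp add: c_def)
  then have "int n dvd D"
    by (metis f1_mod mod_eq_dvd_iff add_diff_cancel_left')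
  have "f1 k (l - 1) = f1 (int k0) (l - int (c k0))"
    using k0 by (intro f1_cong) (simp_all add: c_def)
  also have "\<dots> = (f1 (int k0) l + D) mod int n"
    using shift_c k0 by blast
  also have "\<dots> = f1 (int k0) l"
    using \<open>int n dvd D\<close> by (simp add: mod_add_right_eq[symmetric] dvd_imp_mod_0)
  also have "\<dots> = f1 k l"
    using k0 by (intro f1_cong) simp_all
  finally show ?thesis .
qed

lemma f1_const: "f1 k l = f1 k 0"
proof -
  have "f1 k (int m) = f1 k 0" for m
  proof (induction m)
    case (Suc m)
    then show ?case
      using f1_shift_one[of k "int (Suc m)"] by simp
  qed simp
  moreover have "f1 k l = f1 k (int (residue n l))"
    using n_pos by (intro f1_cong) (simp_all add: int_residue)
  ultimately show ?thesis by simp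
qed

definition h :: "int \<Rightarrow> int" where
  "h j = (f1 j 0 - f1 0 0) mod int n"

lemma f2_eq_h: "f2 i j = h j"
proof -
  have "f1 j 0 = (f1 0 0 + f2 i j) mod int n"
    using f1_hom[of 0 j 0 i] f1_const[of j "- seq_at n s (j - i)"] by simp
  then show ?thesis
    by (simp add: h_def mod_diff_left_eq)
qed

lemma h_add: "h (x + y) = (h x + h y) mod int n"
proof -
  have "f1 (x + y) 0 = (f1 x 0 + h y) mod int n"
    using f1_hom[of x y 0 0] f1_const[of "x + y" "- seq_at n s (x + y)"] f2_eq_h by simp
  then show ?thesis
    by (simp add: h_def mod_diff_left_eq mod_add_left_eq algebra_simps)
qed

lemma h_linear: "h z = (z * h 1) mod int n"
  by (rule additive_mod_linear) (rule h_add)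

lemma h_bounds: "0 \<le> h z" "h z < int n"
  using n_pos by (simp_all add: h_def)

lemma scaled_h: "scaled n (nat (h 1)) s t"
  unfolding scaled_def
proof (intro allI impI)
  fix k assume k: "k < n"
  define a where "a = nat (h 1)"
  have a: "int a = h 1"
    using h_bounds by (simp add: a_def)
  have "h (- seq_at n s (int k)) = (- seq_at n t (h (int k))) mod int n"
  proof -
    have "seq_at n t (f1 (int k) 0 + f2 0 0 - f1 0 0) = seq_at n t (h (int k))"
      using f2_eq_h[of 0 0] by (simp add: seq_at_def h_def residue_def)
    then show ?thesis
      using f2_hom[of "int k" 0 0 0] f2_eq_h by (simp add: h_def)
  qed
  then have "(- (seq_at n s (int k) * h 1)) mod int n = (- seq_at n t (h (int k))) mod int n"
    using h_linear[of "- seq_at n s (int k)"] by simp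
  then have "(seq_at n s (int k) * h 1) mod int n = seq_at n t (h (int k)) mod int n"
    using mod_minus_cong by fastforce
  moreover have "h (int k) = int ((a * k) mod n)"
    using h_linear[of "int k"] a by (simp add: zmod_int mult.commute)
  moreover have "seq_at n t (int ((a * k) mod n)) < int n"
    using zn_seq_t n_pos by (simp add: seq_at_def zn_seq_def)
  ultimately have "int ((a * s k) mod n) = int (t ((a * k) mod n))"
    using k by (simp add: seq_at_def zmod_int mult.commute flip: a of_nat_mult)
  then show "(nat (h 1) * s k) mod n = t ((nat (h 1) * k) mod n)"
    by (simp add: a_def)
qed

lemma zn_unit_h:
  assumes "(0, 1) \<in> f ` Xset n"
  shows "zn_unit n (nat (h 1))"
proof -
  obtain i j where ij: "(i, j) \<in> Xset n" "f (i, j) = (0, 1)"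
    using assms by auto
  define a where "a = nat (h 1)"
  have a: "int a = h 1"
    using h_bounds by (simp add: a_def)
  have "h (int j) = 1"
    using f2_eq_h[of "int i" "int j"] ij by (simp add: f2_def Xset_def)
  then have "int ((a * j) mod n) = 1"
    using h_linear[of "int j"] a by (simp add: zmod_int mult.commute)
  then have "(nat (h 1) * j) mod n = 1"
    by (simp add: a_def)
  moreover have "nat (h 1) < n" "j < n"
    using h_bounds[of 1] ij(1) by (auto simp: Xset_def)
  ultimately show ?thesis
    by (auto simp: zn_unit_def)
qed

end

lemma sol_iso_imp_scaled:
  assumes "n > 1" and "zn_seq n s" and "zn_seq n t" and "nonsingular n s" and "sol_iso n s t"
  shows "\<exists>a. zn_unit n a \<and> scaled n a s t"
proof -
  obtain f where bij: "bij_betw f (Xset n) (Xset n)"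
    and hom: "\<forall>x\<in>Xset n. \<forall>y\<in>Xset n. f (lam n s x y) = lam n t (f x) (f y)"
    using assms(5) unfolding sol_iso_def by blast
  interpret nonsingular_sol_hom n s t f
    using assms bij hom by unfold_locales (auto simp: bij_betw_apply)
  have "(0, 1) \<in> f ` Xset n"
    using bij \<open>n > 1\<close> by (simp add: bij_betw_def Xset_def)
  then show ?thesis
    using scaled_h zn_unit_h by blast
qed

theorem mainTheorem15:
  fixes n :: nat and as cs :: "nat \<Rightarrow> nat"
  assumes "n > 1"
    and "zn_seq n as" and "zn_seq n cs"
    and "sym_seq n as" and "sym_seq n cs"
  shows "((\<exists>a. zn_unit n a \<and> scaled n a as cs) \<longrightarrow> sol_iso n as cs)
       \<and> (nonsingular n as \<and> nonsingular n cs \<and> sol_iso n as cs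
            \<longrightarrow> (\<exists>a. zn_unit n a \<and> scaled n a as cs))"
  using scaled_imp_sol_iso[OF assms(2,3)] sol_iso_imp_scaled[OF assms(1-3)] by blast

end
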